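(* Let $\alpha<\beta$ and let $f$ be a nontrivial (not identically zero), analytic, almost periodic function in the strip $\mathbb{S}_{\alpha,\beta}$. For every $\delta>0$ there are numbers $A=A(f,\delta)$ and $B=B(f,\delta)$ such that \[\left|\frac{f'(s)}{f(s)}\right| \leq A + \frac{B}{\operatorname{dist}(s,\mathscr{Z}_f)}\] for every $s$ in $\mathbb{S}_{\alpha+\delta,\beta-\delta}$.
   Context: $\mathbb{S}_{\alpha,\beta}=\{\sigma+it:\alpha<\sigma<\beta\}$. A function $f$ on $\mathbb{S}_{\alpha,\beta}$ is almost periodic if for every $\varepsilon>0$ there is a relatively dense set of real $\tau$ with $|f(s+i\tau)-f(s)|\le\varepsilon$ for all $s\in\mathbb{S}_{\alpha,\beta}$. $\mathscr{Z}_f$ denotes the zero set of $f$ (with multiplicity), and $\operatorname{dist}(s,\mathscr{Z}_f)$ the distance from $s$ to it (understood as $+\infty$ if $\mathscr{Z}_f$ is empty). *)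

theory Defs
  imports "HOL-Analysis.Analysis"
begin

definition strip :: "real \<Rightarrow> real \<Rightarrow> complex set" where
  "strip \<alpha> \<beta> = {s. \<alpha> < Re s \<and> Re s < \<beta>}"

definition relatively_dense :: "real set \<Rightarrow> bool" where
  "relatively_dense T \<longleftrightarrow> (\<exists>L>0. \<forall>a. \<exists>\<tau>\<in>T. a \<le> \<tau> \<and> \<tau> \<le> a + L)"

definition almost_periodic_on :: "complex set \<Rightarrow> (complex \<Rightarrow> complex) \<Rightarrow> bool" where
  "almost_periodic_on S f \<longleftrightarrow>
     (\<forall>\<epsilon>>0. relatively_dense
        {\<tau>::real. \<forall>s\<in>S. cmod (f (s + \<i> * of_real \<tau>) - f s) \<le> \<epsilon>})"

definition zero_set :: "complex set \<Rightarrow> (complex \<Rightarrow> complex) \<Rightarrow> complex set" where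
  "zero_set S f = {z\<in>S. f z = 0}"

end

theory Submission
  imports Defs "HOL-Complex_Analysis.Complex_Analysis"
begin

(*
  Around a point s, take a circle of radius r on which f has no zeros and |f'/f| <= L. By the
  residue theorem for f'(z) / (f(z) (z - s)), f'(s)/f(s) is 1/(2 pi i) times the integral of that
  function over the circle, which is at most L in modulus, minus the sum of ord(p)/(p - s) over the
  zeros p inside; the argument principle bounds the number of those zeros by r L. Hence
  |f'(s)/f(s)| <= L + r L / dist(s, Z_f).

  The radii r in [delta/4, delta/2] must be chosen uniformly in s so that |f| >= mu > 0 on the circle;
  then L is controlled by Cauchy's estimate, since almost periodicity bounds f on closed substrips.
  If no such mu existed, there would be centres s_n for which every admissible circle carries a
  point with |f| < 1/n. By Montel's theorem the vertical translates f(z + i Im s_n) converge along a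
  subsequence to some g, which is not identically zero because almost periodicity makes each
  translate large somewhere on one fixed vertical segment. A circle around the limit of Re s_n
  avoiding the finitely many nearby zeros of g then gives a uniform lower bound for |f| on the
  circles around s_n, a contradiction.
*)

section \<open>Vertical strips\<close>

lemma open_strip: "open (strip a b)"
  unfolding strip_def by (intro open_Collect_conj open_halfspace_Re_gt open_halfspace_Re_lt)

lemma convex_strip: "convex (strip a b)"
proof -
  have "strip a b = {z. a < Re z} \<inter> {z. Re z < b}" by (auto simp: strip_def)
  then show ?thesis by (simp add: convex_Int convex_halfspace_Re_gt convex_halfspace_Re_lt)
qed

lemma translate_mem_strip_iff [simp]: "z + \<i> * of_real t \<in> strip a b \<longleftrightarrow> z \<in> strip a b"
  by (simp add: strip_def)

lemma cball_subset_strip: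
  assumes "a + r < Re s" "Re s < b - r"
  shows "cball s r \<subseteq> strip a b"
proof
  fix z assume "z \<in> cball s r"
  then have "\<bar>Re z - Re s\<bar> \<le> r"
    using abs_Re_le_cmod[of "z - s"] by (simp add: dist_norm norm_minus_commute)
  then show "z \<in> strip a b" using assms by (auto simp: strip_def)
qed

lemma compact_subset_strip_imp_closed_substrip:
  assumes "compact K" "K \<subseteq> strip a b"
  obtains c d where "a < c" "d < b" "\<And>z. z \<in> K \<Longrightarrow> c \<le> Re z \<and> Re z \<le> d"
proof (cases "K = {}")
  case True
  then show ?thesis using that[of "a + 1" "b - 1"] by auto
next
  case False
  have "continuous_on K Re" by (intro continuous_intros)
  then obtain zmin zmax where "zmin \<in> K" "zmax \<in> K" "\<And>z. z \<in> K \<Longrightarrow> Re zmin \<le> Re z \<and> Re z \<le> Re zmax"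
    using continuous_attains_inf[OF assms(1) False] continuous_attains_sup[OF assms(1) False] by metis
  then show ?thesis using that[of "Re zmin" "Re zmax"] assms(2) by (auto simp: strip_def)
qed

lemma deriv_bound_on_closed_substrip:
  assumes hol: "f holomorphic_on strip a b" and "\<rho> > 0"
    and M: "\<And>z. a + \<rho> \<le> Re z \<Longrightarrow> Re z \<le> b - \<rho> \<Longrightarrow> cmod (f z) \<le> M"
    and z: "a + 2 * \<rho> \<le> Re z" "Re z \<le> b - 2 * \<rho>"
  shows "cmod (deriv f z) \<le> M / \<rho>"
proof -
  have ball_strip: "cball z \<rho> \<subseteq> strip a b"
    using z \<open>\<rho> > 0\<close> by (intro cball_subset_strip) auto
  have "cmod ((deriv ^^ 1) f z) \<le> fact 1 * M / \<rho> ^ 1"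
  proof (rule Cauchy_inequality)
    show "f holomorphic_on ball z \<rho>" using hol ball_strip by (meson ball_subset_cball holomorphic_on_subset order_trans)
    show "continuous_on (cball z \<rho>) f"
      using holomorphic_on_imp_continuous_on[OF hol] ball_strip by (rule continuous_on_subset)
    fix x assume "cmod (z - x) = \<rho>"
    then have "\<bar>Re x - Re z\<bar> \<le> \<rho>" using abs_Re_le_cmod[of "z - x"] by simp
    then show "cmod (f x) \<le> M" using z by (intro M) auto
  qed (use \<open>\<rho> > 0\<close> in simp)
  then show ?thesis by simp
qed

section \<open>Zeros and lower bounds on circles\<close>

lemma finite_zeros_in_compact:
  assumes "f holomorphic_on S" "open S" "connected S" "p \<in> S" "f p \<noteq> 0" "compact K" "K \<subseteq> S"
  shows "finite {z\<in>K. f z = 0}"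
proof (cases "f constant_on S")
  case True
  then have "{z\<in>K. f z = 0} = {}"
    using assms(4,5,7) by (auto simp: constant_on_def)
  then show ?thesis by (metis finite.emptyI)
next
  case False
  then show ?thesis using holomorphic_compact_finite_zeros assms by blast
qed

lemma sphere_avoiding_finite_set:
  assumes "finite Z" "a < b"
  obtains r where "a \<le> r" "r \<le> b" "sphere c r \<inter> Z = {}"
proof -
  have "\<not> {a..b} \<subseteq> dist c ` Z"
    using assms finite_subset infinite_Icc by blast
  then obtain r where "r \<in> {a..b}" "r \<notin> dist c ` Z" by blast
  moreover have "sphere c r \<inter> Z = {}" using \<open>r \<notin> dist c ` Z\<close> by (auto simp: image_iff)
  ultimately show ?thesis using that[of r] by simp
qed

lemma nonzero_on_sphere_imp_bounded_below_nearby: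
  fixes g :: "'a::euclidean_space \<Rightarrow> 'b::real_normed_vector"
  assumes cont: "continuous_on (cball c \<rho>) g" and r: "0 \<le> r" "r < \<rho>"
    and nz: "\<And>z. z \<in> sphere c r \<Longrightarrow> g z \<noteq> 0"
  obtains \<eta> m where "\<eta> > 0" "m > 0" "\<And>c' z. dist c' c < \<eta> \<Longrightarrow> z \<in> sphere c' r \<Longrightarrow> m \<le> norm (g z)"
proof -
  have cont_sphere: "continuous_on (sphere c r) (\<lambda>z. norm (g z))"
    using r by (intro continuous_on_norm continuous_on_subset[OF cont]) auto
  have "sphere c r \<noteq> {}" using r by simp
  then obtain z0 where z0: "z0 \<in> sphere c r" and min: "\<forall>z\<in>sphere c r. norm (g z0) \<le> norm (g z)"
    using continuous_attains_inf[OF compact_sphere _ cont_sphere] by blast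
  define m where "m = norm (g z0) / 2"
  have m: "m > 0" using nz[OF z0] by (simp add: m_def)
  obtain d where d: "d > 0" and uc: "\<And>x y. x \<in> cball c \<rho> \<Longrightarrow> y \<in> cball c \<rho> \<Longrightarrow> dist y x < d \<Longrightarrow> dist (g y) (g x) < m"
    using uniformly_continuous_onE[OF compact_uniformly_continuous[OF cont compact_cball] m] by blast
  have "m \<le> norm (g z)" if c': "dist c' c < min d (\<rho> - r)" and z: "z \<in> sphere c' r" for c' z
  proof -
    define \<zeta> where "\<zeta> = z - c' + c"
    have \<zeta>: "\<zeta> \<in> sphere c r" using z by (simp add: \<zeta>_def dist_norm algebra_simps)
    have "dist \<zeta> z < d" using c' by (simp add: \<zeta>_def dist_norm algebra_simps norm_minus_commute)
    moreover have "z \<in> cball c \<rho>"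
      using z c' dist_triangle[of c z c'] by (simp add: dist_commute)
    moreover have "\<zeta> \<in> cball c \<rho>" using \<zeta> r by simp
    ultimately have "dist (g \<zeta>) (g z) < m" using uc by blast
    moreover have "2 * m \<le> norm (g \<zeta>)" using min \<zeta> by (simp add: m_def)
    ultimately have "m \<le> norm (g \<zeta>) - norm (g \<zeta> - g z)" by (simp add: dist_norm)
    also have "\<dots> \<le> norm (g z)" using norm_triangle_ineq2[of "g \<zeta>" "g z"] by simp
    finally show ?thesis .
  qed
  moreover have "min d (\<rho> - r) > 0" using d r by simp
  ultimately show ?thesis using that m by blast
qed

lemma uniform_limit_bounded_below_on_nearby_spheres:
  fixes G :: "nat \<Rightarrow> 'a::euclidean_space \<Rightarrow> 'b::real_normed_vector"
  assumes lim: "uniform_limit (cball \<sigma> \<rho>) G g sequentially" and cont: "continuous_on (cball \<sigma> \<rho>) g"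
    and r: "0 \<le> r" "r < \<rho>" and nz: "\<And>z. z \<in> sphere \<sigma> r \<Longrightarrow> g z \<noteq> 0" and c: "c \<longlonglongrightarrow> \<sigma>"
  obtains m where "m > 0" "\<forall>\<^sub>F n in sequentially. \<forall>z\<in>sphere (c n) r. m \<le> norm (G n z)"
proof -
  obtain \<eta> m where "\<eta> > 0" "m > 0"
    and g_large: "\<And>c' z. dist c' \<sigma> < \<eta> \<Longrightarrow> z \<in> sphere c' r \<Longrightarrow> m \<le> norm (g z)"
    using nonzero_on_sphere_imp_bounded_below_nearby[OF cont r nz] by blast
  have "\<forall>\<^sub>F n in sequentially. \<forall>z\<in>cball \<sigma> \<rho>. dist (G n z) (g z) < m / 2"
    using uniform_limitD[OF lim, of "m / 2"] \<open>m > 0\<close> by simp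
  moreover have "\<forall>\<^sub>F n in sequentially. dist (c n) \<sigma> < min \<eta> (\<rho> - r)"
    using tendstoD[OF c, of "min \<eta> (\<rho> - r)"] \<open>\<eta> > 0\<close> r by simp
  ultimately have "\<forall>\<^sub>F n in sequentially. \<forall>z\<in>sphere (c n) r. m / 2 \<le> norm (G n z)"
  proof eventually_elim
    case (elim n)
    show ?case
    proof
      fix z assume z: "z \<in> sphere (c n) r"
      then have "z \<in> cball \<sigma> \<rho>" using elim(2) dist_triangle[of \<sigma> z "c n"] by (simp add: dist_commute)
      then have "dist (G n z) (g z) < m / 2" using elim(1) by blast
      moreover have "m \<le> norm (g z)" using g_large elim(2) z by force
      ultimately show "m / 2 \<le> norm (G n z)"
        using norm_triangle_ineq2[of "g z" "G n z"] by (simp add: dist_norm norm_minus_commute)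
    qed
  qed
  then show ?thesis using that[of "m / 2"] \<open>m > 0\<close> by simp
qed

lemma uniform_limit_nonzero_somewhere:
  assumes lim: "uniform_limit W F g sequentially" and "c > 0"
    and large: "\<And>n. \<exists>w\<in>W. c \<le> norm (F n w)"
  shows "\<exists>w\<in>W. g w \<noteq> 0"
proof (rule ccontr)
  assume "\<not> (\<exists>w\<in>W. g w \<noteq> 0)"
  then have g0: "\<And>w. w \<in> W \<Longrightarrow> g w = 0" by blast
  obtain n where "\<forall>w\<in>W. dist (F n w) (g w) < c"
    using eventually_happens'[OF sequentially_bot uniform_limitD[OF lim \<open>c > 0\<close>]] by blast
  moreover obtain w where "w \<in> W" "c \<le> norm (F n w)" using large by blast
  ultimately show False using g0 by (force simp: dist_norm)
qed

section \<open>Almost periodic functions in a strip\<close>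

lemma almost_periodic_onE:
  assumes "almost_periodic_on S f" "\<epsilon> > 0"
  obtains L where
    "\<And>y. \<exists>\<tau>. y - L \<le> \<tau> \<and> \<tau> \<le> y \<and> (\<forall>s\<in>S. cmod (f (s + \<i> * of_real \<tau>) - f s) \<le> \<epsilon>)"
proof -
  obtain L where
    "\<And>x. \<exists>\<tau>. x \<le> \<tau> \<and> \<tau> \<le> x + L \<and> (\<forall>s\<in>S. cmod (f (s + \<i> * of_real \<tau>) - f s) \<le> \<epsilon>)"
    using assms unfolding almost_periodic_on_def relatively_dense_def by fastforce
  then show ?thesis using that[of L] by (metis diff_add_cancel)
qed

lemma almost_periodic_bounded_on_closed_substrip:
  assumes ap: "almost_periodic_on (strip a b) f" and cont: "continuous_on (strip a b) f"
    and "a < c" "d < b"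
  obtains M where "\<And>z. c \<le> Re z \<Longrightarrow> Re z \<le> d \<Longrightarrow> cmod (f z) \<le> M"
proof -
  obtain L where L: "\<And>y. \<exists>\<tau>. y - L \<le> \<tau> \<and> \<tau> \<le> y \<and> (\<forall>s\<in>strip a b. cmod (f (s + \<i> * of_real \<tau>) - f s) \<le> 1)"
    using almost_periodic_onE[OF ap zero_less_one] by blast
  define R where "R = cbox (Complex c 0) (Complex d L)"
  have mem_R: "z \<in> R \<longleftrightarrow> c \<le> Re z \<and> Re z \<le> d \<and> 0 \<le> Im z \<and> Im z \<le> L" for z
    by (auto simp: R_def mem_box Basis_complex_def)
  have R_strip: "R \<subseteq> strip a b" using assms by (auto simp: mem_R strip_def)
  have "compact (f ` R)"
    by (metis R_def R_strip compact_cbox compact_continuous_image cont continuous_on_subset)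
  then obtain M where M: "\<And>z. z \<in> R \<Longrightarrow> cmod (f z) \<le> M"
    by (meson bounded_iff compact_imp_bounded image_eqI)
  \<comment> \<open>every z lies a 1-almost period above a point of the compact rectangle R\<close>
  have "cmod (f z) \<le> M + 1" if "c \<le> Re z" "Re z \<le> d" for z
  proof -
    obtain \<tau> where \<tau>: "Im z - L \<le> \<tau>" "\<tau> \<le> Im z"
      and period: "\<forall>s\<in>strip a b. cmod (f (s + \<i> * of_real \<tau>) - f s) \<le> 1"
      using L[of "Im z"] by blast
    define z' where "z' = z - \<i> * of_real \<tau>"
    have "z' \<in> R" using that \<tau> by (auto simp: mem_R z'_def)
    moreover have "cmod (f z - f z') \<le> 1"
      using period R_strip \<open>z' \<in> R\<close> by (force simp: z'_def)
    ultimately show ?thesis using M norm_triangle_sub[of "f z" "f z'"] by fastforce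
  qed
  then show ?thesis using that by blast
qed

lemma almost_periodic_translate_large_on_segment:
  assumes ap: "almost_periodic_on (strip a b) f" and p0: "p0 \<in> strip a b" "f p0 \<noteq> 0"
  obtains L where "\<And>t. \<exists>u\<in>{-L..0}. cmod (f p0) / 2 \<le> cmod (f (p0 + \<i> * of_real u + \<i> * of_real t))"
proof -
  obtain L where L: "\<And>y. \<exists>\<tau>. y - L \<le> \<tau> \<and> \<tau> \<le> y \<and>
      (\<forall>s\<in>strip a b. cmod (f (s + \<i> * of_real \<tau>) - f s) \<le> cmod (f p0) / 2)"
    using almost_periodic_onE[OF ap, of "cmod (f p0) / 2"] p0 by (metis zero_less_divide_iff zero_less_norm_iff zero_less_numeral)
  have "\<exists>u\<in>{-L..0}. cmod (f p0) / 2 \<le> cmod (f (p0 + \<i> * of_real u + \<i> * of_real t))" for t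
  proof -
    obtain \<tau> where \<tau>: "t - L \<le> \<tau>" "\<tau> \<le> t" "cmod (f (p0 + \<i> * of_real \<tau>) - f p0) \<le> cmod (f p0) / 2"
      using L[of t] p0 by blast
    then have "cmod (f p0) / 2 \<le> cmod (f (p0 + \<i> * of_real \<tau>))"
      using norm_triangle_ineq2[of "f p0" "f (p0 + \<i> * of_real \<tau>)"] by (simp add: norm_minus_commute)
    moreover have "p0 + \<i> * of_real (\<tau> - t) + \<i> * of_real t = p0 + \<i> * of_real \<tau>"
      by (simp add: algebra_simps)
    moreover have "\<tau> - t \<in> {-L..0}" using \<tau> by auto
    ultimately show ?thesis by metis
  qed
  then show ?thesis using that by blast
qed

lemma almost_periodic_translates_converge:
  fixes t :: "nat \<Rightarrow> real"
  assumes hol: "f holomorphic_on strip a b" and ap: "almost_periodic_on (strip a b) f"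
    and p0: "p0 \<in> strip a b" "f p0 \<noteq> 0"
  obtains g \<rho> where "g holomorphic_on strip a b" "strict_mono \<rho>" "\<exists>w\<in>strip a b. g w \<noteq> 0"
    "\<And>K. compact K \<Longrightarrow> K \<subseteq> strip a b \<Longrightarrow>
       uniform_limit K (\<lambda>n z. f (z + \<i> * of_real (t (\<rho> n)))) g sequentially"
proof -
  define F where "F = (\<lambda>\<tau> z. f (z + \<i> * of_real \<tau>))"
  have F_hol: "F \<tau> holomorphic_on strip a b" for \<tau>
  proof -
    have "f \<circ> (\<lambda>z. z + \<i> * of_real \<tau>) holomorphic_on strip a b"
      by (intro holomorphic_on_compose holomorphic_intros holomorphic_on_subset[OF hol]) auto
    then show ?thesis by (simp add: F_def o_def)
  qed
  have F_bounded: "\<exists>B. \<forall>h\<in>range F. \<forall>z\<in>K. cmod (h z) \<le> B" if "compact K" "K \<subseteq> strip a b" for K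
  proof -
    obtain c d where "a < c" "d < b" and K: "\<And>z. z \<in> K \<Longrightarrow> c \<le> Re z \<and> Re z \<le> d"
      using compact_subset_strip_imp_closed_substrip \<open>compact K\<close> \<open>K \<subseteq> strip a b\<close> by metis
    then obtain M where M: "\<And>z. c \<le> Re z \<Longrightarrow> Re z \<le> d \<Longrightarrow> cmod (f z) \<le> M"
      using almost_periodic_bounded_on_closed_substrip[OF ap holomorphic_on_imp_continuous_on[OF hol]]
      by blast
    show ?thesis using K by (intro exI[of _ M]) (auto simp: F_def intro!: M)
  qed
  obtain g \<rho> where g: "g holomorphic_on strip a b" "strict_mono \<rho>"
    and lim: "\<And>K. compact K \<Longrightarrow> K \<subseteq> strip a b \<Longrightarrow> uniform_limit K (F \<circ> t \<circ> \<rho>) g sequentially"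
    by (rule Montel[OF open_strip[of a b] _ F_bounded, where \<F> = "F \<circ> t"]) (use F_hol in auto)
  obtain L where L: "\<And>\<tau>. \<exists>u\<in>{-L..0}. cmod (f p0) / 2 \<le> cmod (F \<tau> (p0 + \<i> * of_real u))"
    using almost_periodic_translate_large_on_segment[OF ap p0] unfolding F_def by blast
  define W where "W = (\<lambda>u. p0 + \<i> * of_real u) ` {-L..0}"
  have W: "compact W" "W \<subseteq> strip a b"
    using p0 by (auto simp: W_def intro!: compact_continuous_image continuous_intros)
  have "\<exists>w\<in>W. g w \<noteq> 0"
  proof (rule uniform_limit_nonzero_somewhere[OF lim[OF W]])
    show "\<exists>w\<in>W. cmod (f p0) / 2 \<le> cmod ((F \<circ> t \<circ> \<rho>) n w)" for n
      using L[of "t (\<rho> n)"] by (auto simp: W_def)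
  qed (use p0 in simp)
  then show ?thesis
    using that[OF g] lim W by (auto simp: F_def o_def)
qed

lemma almost_periodic_circles_bounded_below_subseq:
  fixes s :: "nat \<Rightarrow> complex"
  assumes hol: "f holomorphic_on strip \<alpha> \<beta>" and ap: "almost_periodic_on (strip \<alpha> \<beta>) f"
    and p0: "p0 \<in> strip \<alpha> \<beta>" "f p0 \<noteq> 0"
    and radii: "0 \<le> r\<^sub>1" "r\<^sub>1 < r\<^sub>2" "r\<^sub>2 < \<delta>"
    and s: "\<And>n. s n \<in> strip (\<alpha> + \<delta>) (\<beta> - \<delta>)"
  obtains k r m where "strict_mono k" "r\<^sub>1 \<le> r" "r \<le> r\<^sub>2" "m > 0"
    "\<forall>\<^sub>F n in sequentially. \<forall>z\<in>sphere (s (k n)) r. m \<le> cmod (f z)"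
proof -
  have "seq_compact {\<alpha> + \<delta>..\<beta> - \<delta>}" by (simp add: compact_imp_seq_compact)
  moreover have "\<forall>n. Re (s n) \<in> {\<alpha> + \<delta>..\<beta> - \<delta>}" using s by (auto simp: strip_def less_imp_le)
  ultimately obtain l k\<^sub>1 where l: "l \<in> {\<alpha> + \<delta>..\<beta> - \<delta>}" and "strict_mono k\<^sub>1"
    and lim_Re: "((\<lambda>n. Re (s n)) \<circ> k\<^sub>1) \<longlonglongrightarrow> l"
    by (rule seq_compactE)
  obtain g k\<^sub>2 where g: "g holomorphic_on strip \<alpha> \<beta>" and "strict_mono k\<^sub>2"
    and g_nonzero: "\<exists>w\<in>strip \<alpha> \<beta>. g w \<noteq> 0"
    and lim_f: "\<And>K. compact K \<Longrightarrow> K \<subseteq> strip \<alpha> \<beta> \<Longrightarrow>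
       uniform_limit K (\<lambda>n z. f (z + \<i> * of_real (Im (s (k\<^sub>1 (k\<^sub>2 n)))))) g sequentially"
    using almost_periodic_translates_converge[OF hol ap p0, of "\<lambda>n. Im (s (k\<^sub>1 n))"] by blast
  define k where "k = k\<^sub>1 \<circ> k\<^sub>2"
  define \<rho> where "\<rho> = (r\<^sub>2 + \<delta>) / 2"
  have ball_strip: "cball (of_real l) \<rho> \<subseteq> strip \<alpha> \<beta>"
    using l radii by (intro cball_subset_strip) (auto simp: \<rho>_def field_simps)
  obtain w where "w \<in> strip \<alpha> \<beta>" "g w \<noteq> 0" using g_nonzero by blast
  then have "finite {z\<in>cball (of_real l) \<rho>. g z = 0}"
    by (rule finite_zeros_in_compact[OF g open_strip convex_connected[OF convex_strip] _ _ compact_cball ball_strip])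
  then obtain r where r: "r\<^sub>1 \<le> r" "r \<le> r\<^sub>2" and avoid: "sphere (of_real l) r \<inter> {z\<in>cball (of_real l) \<rho>. g z = 0} = {}"
    by (rule sphere_avoiding_finite_set[OF _ radii(2)])
  have "0 \<le> r" "r < \<rho>" using r radii by (simp_all add: \<rho>_def)
  then have g_sphere: "g z \<noteq> 0" if "z \<in> sphere (of_real l) r" for z
    using avoid that by auto
  have "continuous_on (cball (of_real l) \<rho>) g"
    by (rule holomorphic_on_imp_continuous_on[OF holomorphic_on_subset[OF g ball_strip]])
  moreover have "(\<lambda>n. complex_of_real (Re (s (k n)))) \<longlonglongrightarrow> of_real l"
    using LIMSEQ_subseq_LIMSEQ[OF lim_Re \<open>strict_mono k\<^sub>2\<close>] by (simp add: k_def o_def tendsto_of_real)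
  ultimately obtain m where "m > 0" and large: "\<forall>\<^sub>F n in sequentially.
      \<forall>z\<in>sphere (of_real (Re (s (k n)))) r. m \<le> cmod (f (z + \<i> * of_real (Im (s (k n)))))"
    using uniform_limit_bounded_below_on_nearby_spheres[OF lim_f[OF compact_cball ball_strip] _
        \<open>0 \<le> r\<close> \<open>r < \<rho>\<close> g_sphere] by (simp add: k_def) blast
  have "sphere (s n) r = (\<lambda>z. z + \<i> * of_real (Im (s n))) ` sphere (of_real (Re (s n))) r" for n
    using sphere_translation[of "\<i> * of_real (Im (s n))" "of_real (Re (s n))" r]
    by (simp add: add.commute flip: complex_eq)
  then have "\<forall>\<^sub>F n in sequentially. \<forall>z\<in>sphere (s (k n)) r. m \<le> cmod (f z)"
    using large by simp
  moreover have "strict_mono k" unfolding k_def using \<open>strict_mono k\<^sub>1\<close> \<open>strict_mono k\<^sub>2\<close> by (rule strict_mono_o)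
  ultimately show ?thesis using that r \<open>m > 0\<close> by blast
qed

lemma almost_periodic_circles_bounded_below:
  assumes hol: "f holomorphic_on strip \<alpha> \<beta>" and ap: "almost_periodic_on (strip \<alpha> \<beta>) f"
    and p0: "p0 \<in> strip \<alpha> \<beta>" "f p0 \<noteq> 0"
    and radii: "0 \<le> r\<^sub>1" "r\<^sub>1 < r\<^sub>2" "r\<^sub>2 < \<delta>"
  obtains \<mu> where "\<mu> > 0"
    "\<And>s. s \<in> strip (\<alpha> + \<delta>) (\<beta> - \<delta>) \<Longrightarrow> \<exists>r\<in>{r\<^sub>1..r\<^sub>2}. \<forall>z\<in>sphere s r. \<mu> \<le> cmod (f z)"
proof -
  have "\<exists>\<mu>>0. \<forall>s\<in>strip (\<alpha> + \<delta>) (\<beta> - \<delta>). \<exists>r\<in>{r\<^sub>1..r\<^sub>2}. \<forall>z\<in>sphere s r. \<mu> \<le> cmod (f z)"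
  proof (rule ccontr)
    assume "\<not> ?thesis"
    then have no_bound: "\<forall>\<mu>>0. \<exists>s\<in>strip (\<alpha> + \<delta>) (\<beta> - \<delta>). \<forall>r\<in>{r\<^sub>1..r\<^sub>2}. \<exists>z\<in>sphere s r. cmod (f z) < \<mu>"
      by (simp add: not_le)
    have "\<exists>s. s \<in> strip (\<alpha> + \<delta>) (\<beta> - \<delta>) \<and>
        (\<forall>r\<in>{r\<^sub>1..r\<^sub>2}. \<exists>z\<in>sphere s r. cmod (f z) < 1 / real (Suc n))" for n
      using no_bound[rule_format, of "1 / real (Suc n)"] by auto
    then obtain s :: "nat \<Rightarrow> complex" where s: "\<And>n. s n \<in> strip (\<alpha> + \<delta>) (\<beta> - \<delta>)"
      and small: "\<And>n r. r \<in> {r\<^sub>1..r\<^sub>2} \<Longrightarrow> \<exists>z\<in>sphere (s n) r. cmod (f z) < 1 / real (Suc n)"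
      by metis
    obtain k r m where "strict_mono k" "r\<^sub>1 \<le> r" "r \<le> r\<^sub>2" "m > 0"
      and large: "\<forall>\<^sub>F n in sequentially. \<forall>z\<in>sphere (s (k n)) r. m \<le> cmod (f z)"
      by (rule almost_periodic_circles_bounded_below_subseq[OF hol ap p0 radii s])
    have "(\<lambda>n. 1 / real (Suc n)) \<longlonglongrightarrow> 0"
      by (rule LIMSEQ_Suc[OF lim_1_over_n])
    then have lim_k: "((\<lambda>n. 1 / real (Suc n)) \<circ> k) \<longlonglongrightarrow> 0"
      by (rule LIMSEQ_subseq_LIMSEQ[OF _ \<open>strict_mono k\<close>])
    have "\<forall>\<^sub>F n in sequentially. 1 / real (Suc (k n)) < m"
      using tendstoD[OF lim_k \<open>m > 0\<close>] by (simp add: o_def)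
    then obtain n where "1 / real (Suc (k n)) < m" "\<forall>z\<in>sphere (s (k n)) r. m \<le> cmod (f z)"
      using eventually_happens'[OF sequentially_bot eventually_conj[OF _ large]] by blast
    moreover obtain z where "z \<in> sphere (s (k n)) r" "cmod (f z) < 1 / real (Suc (k n))"
      using small[of r "k n"] \<open>r\<^sub>1 \<le> r\<close> \<open>r \<le> r\<^sub>2\<close> by auto
    ultimately show False by fastforce
  qed
  then show ?thesis using that by blast
qed

section \<open>The logarithmic derivative inside a circle\<close>

lemma winding_number_circlepath_outside:
  assumes "\<bar>r\<bar> < dist z w"
  shows "winding_number (circlepath z r) w = 0"
  using assms by (intro winding_number_zero_outside[of _ "cball z \<bar>r\<bar>"]) auto

lemma winding_number_circlepath_eq:
  assumes "0 < r" "w \<notin> sphere z r"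
  shows "winding_number (circlepath z r) w = (if w \<in> ball z r then 1 else 0)"
  using assms winding_number_circlepath[of w z r] winding_number_circlepath_outside[of r z w]
  by (auto simp: dist_norm norm_minus_commute)

lemma residue_logderiv_at_zero:
  assumes S: "open S" "p \<in> S" and hol: "f holomorphic_on S" "h holomorphic_on S"
    and fin: "finite {z\<in>S. f z = 0}" and "f p = 0"
  shows "residue (\<lambda>z. deriv f z * h z / f z) p = h p * of_int (zorder f p)"
proof -
  obtain e where "e > 0" and e: "\<forall>w\<in>ball p e. w \<in> S \<and> (w \<noteq> p \<longrightarrow> w \<notin> {z\<in>S. f z = 0})"
    using finite_ball_avoid[OF S(1) fin S(2)] by blast
  define B where "B = ball p e"
  have "B \<subseteq> S" using e by (auto simp: B_def)
  have zeros_B: "{w\<in>B. f w = 0 \<or> w \<in> {}} = {p}"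
    using e \<open>e > 0\<close> \<open>f p = 0\<close> by (auto simp: B_def)
  \<comment> \<open>the argument principle and the residue compute the same integral over a small circle\<close>
  have "contour_integral (circlepath p (e/2)) (\<lambda>z. deriv f z * h z / f z) =
      2 * pi * \<i> * (\<Sum>q\<in>{w\<in>B. f w = 0 \<or> w \<in> {}}. winding_number (circlepath p (e/2)) q * h q * zorder f q)"
  proof (rule argument_principle)
    show "path_image (circlepath p (e/2)) \<subseteq> B - {w\<in>B. f w = 0 \<or> w \<in> {}}"
      unfolding zeros_B using \<open>e > 0\<close> by (auto simp: B_def)
    show "\<forall>z. z \<notin> B \<longrightarrow> winding_number (circlepath p (e/2)) z = 0"
      using \<open>e > 0\<close> by (auto simp: B_def intro!: winding_number_circlepath_outside)
  qed (use hol \<open>B \<subseteq> S\<close> zeros_B in \<open>auto simp: B_def intro: holomorphic_on_subset\<close>)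
  also have "\<dots> = 2 * pi * \<i> * (h p * zorder f p)"
    unfolding zeros_B using \<open>e > 0\<close> by (simp add: winding_number_circlepath_centre)
  finally have "contour_integral (circlepath p (e/2)) (\<lambda>z. deriv f z * h z / f z) = 2 * pi * \<i> * (h p * zorder f p)" .
  moreover have "((\<lambda>z. deriv f z * h z / f z) has_contour_integral
      2 * pi * \<i> * residue (\<lambda>z. deriv f z * h z / f z) p) (circlepath p (e/2))"
  proof (rule base_residue[of B])
    have "f holomorphic_on B" using hol(1) \<open>B \<subseteq> S\<close> by (rule holomorphic_on_subset)
    then show "(\<lambda>z. deriv f z * h z / f z) holomorphic_on B - {p}"
      using hol(2) \<open>B \<subseteq> S\<close> e by (force simp: B_def intro!: holomorphic_intros holomorphic_deriv intro: holomorphic_on_subset)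
  qed (use \<open>e > 0\<close> in \<open>auto simp: B_def\<close>)
  ultimately show ?thesis using contour_integral_unique by fastforce
qed

lemma sum_winding_number_circlepath:
  assumes "finite Z" "0 < r" "Z \<inter> sphere s r = {}"
  shows "(\<Sum>p\<in>Z. winding_number (circlepath s r) p * g p) = (\<Sum>p\<in>Z \<inter> ball s r. g p)"
proof -
  have "winding_number (circlepath s r) p = (if p \<in> ball s r then 1 else 0)" if "p \<in> Z" for p
    using assms that by (intro winding_number_circlepath_eq) auto
  then have "(\<Sum>p\<in>Z. winding_number (circlepath s r) p * g p) = (\<Sum>p\<in>Z. if p \<in> ball s r then g p else 0)"
    by (intro sum.cong) auto
  also have "\<dots> = (\<Sum>p\<in>Z \<inter> ball s r. g p)"
    using assms(1) by (simp add: sum.inter_restrict)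
  finally show ?thesis .
qed

lemma contour_integral_logderiv_circlepath:
  assumes hol: "f holomorphic_on ball s R" and fin: "finite {z\<in>ball s R. f z = 0}"
    and r: "0 < r" "r < R" and sph: "\<And>z. z \<in> sphere s r \<Longrightarrow> f z \<noteq> 0"
  shows "contour_integral (circlepath s r) (\<lambda>z. deriv f z / f z) =
    2 * pi * \<i> * (\<Sum>p\<in>{z\<in>ball s r. f z = 0}. of_int (zorder f p))"
proof -
  define Z where "Z = {z\<in>ball s R. f z = 0}"
  have Z_eq: "{w\<in>ball s R. f w = 0 \<or> w \<in> {}} = Z" by (simp add: Z_def)
  have "contour_integral (circlepath s r) (\<lambda>z. deriv f z * 1 / f z) =
      2 * pi * \<i> * (\<Sum>p\<in>{w\<in>ball s R. f w = 0 \<or> w \<in> {}}. winding_number (circlepath s r) p * 1 * zorder f p)"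
  proof (rule argument_principle)
    show "path_image (circlepath s r) \<subseteq> ball s R - {w\<in>ball s R. f w = 0 \<or> w \<in> {}}"
      using r sph by auto
    show "\<forall>z. z \<notin> ball s R \<longrightarrow> winding_number (circlepath s r) z = 0"
      using r by (auto intro!: winding_number_circlepath_outside)
  qed (use hol fin in auto)
  also have "\<dots> = 2 * pi * \<i> * (\<Sum>p\<in>Z \<inter> ball s r. of_int (zorder f p))"
  proof -
    have "Z \<inter> sphere s r = {}" using sph by (auto simp: Z_def)
    then show ?thesis
      unfolding Z_eq using sum_winding_number_circlepath[of Z r s] fin r by (simp add: Z_def)
  qed
  also have "Z \<inter> ball s r = {z\<in>ball s r. f z = 0}" using r by (auto simp: Z_def)
  finally show ?thesis by simp
qed

lemma contour_integral_logderiv_div_circlepath: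
  assumes hol: "f holomorphic_on ball s R" and fin: "finite {z\<in>ball s R. f z = 0}"
    and r: "0 < r" "r < R" and sph: "\<And>z. z \<in> sphere s r \<Longrightarrow> f z \<noteq> 0" and "f s \<noteq> 0"
  shows "contour_integral (circlepath s r) (\<lambda>z. deriv f z / f z / (z - s)) =
    2 * pi * \<i> * (deriv f s / f s + (\<Sum>p\<in>{z\<in>ball s r. f z = 0}. of_int (zorder f p) / (p - s)))"
proof -
  define Z where "Z = {z\<in>ball s R. f z = 0}"
  define F where "F = (\<lambda>z. deriv f z / f z / (z - s))"
  have "finite Z" "s \<notin> Z" using fin \<open>f s \<noteq> 0\<close> by (auto simp: Z_def)
  have "deriv f holomorphic_on ball s R" by (rule holomorphic_deriv[OF hol open_ball])
  then have logderiv_hol: "(\<lambda>z. deriv f z / f z) holomorphic_on ball s R - Z"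
    using hol by (intro holomorphic_on_divide) (auto simp: Z_def elim: holomorphic_on_subset)
  have "F holomorphic_on ball s R - insert s Z"
    unfolding F_def by (intro holomorphic_intros holomorphic_on_subset[OF logderiv_hol]) auto
  then have "contour_integral (circlepath s r) F =
      2 * pi * \<i> * (\<Sum>p\<in>insert s Z. winding_number (circlepath s r) p * residue F p)"
    by (rule Residue_theorem[rotated 3]) (use \<open>finite Z\<close> r sph in \<open>auto simp: Z_def intro!: winding_number_circlepath_outside\<close>)
  moreover have "residue F s = deriv f s / f s"
    unfolding F_def using \<open>finite Z\<close> \<open>s \<notin> Z\<close> r
    by (intro residue_simple[OF _ _ logderiv_hol]) (auto intro!: open_Diff finite_imp_closed)
  moreover have "residue F p = of_int (zorder f p) / (p - s)" if "p \<in> Z" for p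
  proof -
    have F_eq: "F = (\<lambda>z. deriv f z * (1 / (z - s)) / f z)" by (simp add: F_def fun_eq_iff)
    have "finite {z\<in>ball s R - {s}. f z = 0}" using fin by (rule rev_finite_subset) auto
    then have "residue (\<lambda>z. deriv f z * (1 / (z - s)) / f z) p = 1 / (p - s) * of_int (zorder f p)"
      using that \<open>s \<notin> Z\<close> hol
      by (intro residue_logderiv_at_zero[of "ball s R - {s}"])
        (auto simp: Z_def intro: holomorphic_on_subset intro!: holomorphic_intros)
    then show ?thesis unfolding F_eq by simp
  qed
  moreover have "Z \<inter> sphere s r = {}" using sph by (auto simp: Z_def)
  ultimately have "contour_integral (circlepath s r) F =
      2 * pi * \<i> * (deriv f s / f s + (\<Sum>p\<in>Z \<inter> ball s r. of_int (zorder f p) / (p - s)))"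
    using \<open>finite Z\<close> \<open>s \<notin> Z\<close> r sum_winding_number_circlepath[of Z r s "\<lambda>p. of_int (zorder f p) / (p - s)"]
    by (simp add: winding_number_circlepath_centre)
  also have "Z \<inter> ball s r = {z\<in>ball s r. f z = 0}" using r by (auto simp: Z_def)
  finally show ?thesis by (simp add: F_def)
qed

lemma norm_contour_integral_circlepath_le:
  assumes "continuous_on (sphere z r) g" "0 < r" "\<And>x. x \<in> sphere z r \<Longrightarrow> norm (g x) \<le> B"
  shows "norm (contour_integral (circlepath z r) g) \<le> B * (2 * pi * r)"
proof (rule has_contour_integral_bound_circlepath)
  show "(g has_contour_integral contour_integral (circlepath z r) g) (circlepath z r)"
    using assms(1,2) by (intro has_contour_integral_integral contour_integrable_continuous_circlepath) simp
  have "z + of_real r \<in> sphere z r" using assms(2) by (simp add: dist_norm)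
  then show "0 \<le> B" using assms(3) norm_ge_zero order_trans by blast
qed (use assms in \<open>auto simp: dist_norm norm_minus_commute\<close>)

lemma zorder_nonneg_of_finite_zeros:
  assumes "open S" "f holomorphic_on S" "finite {z\<in>S. f z = 0}" "p \<in> S"
  shows "0 \<le> zorder f p"
proof (rule zorder_ge_0)
  show "f analytic_on {p}" using assms by (intro holomorphic_on_imp_analytic_at)
  obtain e where "e > 0" and e: "\<forall>w\<in>ball p e. w \<in> S \<and> (w \<noteq> p \<longrightarrow> w \<notin> {z\<in>S. f z = 0})"
    using finite_ball_avoid[OF assms(1,3,4)] by blast
  have "\<forall>\<^sub>F w in at p. f w \<noteq> 0"
    unfolding eventually_at using \<open>e > 0\<close> e by (auto simp: dist_commute)
  then show "\<exists>\<^sub>F w in at p. f w \<noteq> 0" by (rule eventually_frequently[rotated]) simp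
qed

lemma sum_zorder_le_logderiv_bound:
  assumes hol: "f holomorphic_on ball s R" and fin: "finite {z\<in>ball s R. f z = 0}"
    and r: "0 < r" "r < R" and sph: "\<And>z. z \<in> sphere s r \<Longrightarrow> f z \<noteq> 0"
    and L: "\<And>z. z \<in> sphere s r \<Longrightarrow> cmod (deriv f z / f z) \<le> L"
  shows "(\<Sum>p\<in>{z\<in>ball s r. f z = 0}. real_of_int (zorder f p)) \<le> r * L"
proof -
  define N where "N = (\<Sum>p\<in>{z\<in>ball s r. f z = 0}. real_of_int (zorder f p))"
  have "deriv f holomorphic_on ball s R" by (rule holomorphic_deriv[OF hol open_ball])
  then have cont: "continuous_on (sphere s r) (\<lambda>z. deriv f z / f z)"
    using hol sph r by (intro continuous_on_divide) (auto intro: holomorphic_on_imp_continuous_on elim!: holomorphic_on_subset)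
  have "(\<Sum>p\<in>{z\<in>ball s r. f z = 0}. of_int (zorder f p)) = complex_of_real N"
    by (simp add: N_def of_real_sum)
  then have "2 * pi * N \<le> cmod (contour_integral (circlepath s r) (\<lambda>z. deriv f z / f z))"
    using contour_integral_logderiv_circlepath[OF hol fin r sph] by (simp add: norm_mult)
  also have "\<dots> \<le> L * (2 * pi * r)"
    by (rule norm_contour_integral_circlepath_le[OF cont r(1) L])
  finally show ?thesis by (simp add: N_def algebra_simps)
qed

lemma logderiv_bound_by_circle:
  assumes hol: "f holomorphic_on ball s R" and fin: "finite {z\<in>ball s R. f z = 0}"
    and r: "0 < r" "r < R" and sph: "\<And>z. z \<in> sphere s r \<Longrightarrow> f z \<noteq> 0" and "f s \<noteq> 0"
    and L: "\<And>z. z \<in> sphere s r \<Longrightarrow> cmod (deriv f z / f z) \<le> L"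
    and K: "0 \<le> K" "\<And>p. p \<in> ball s r \<Longrightarrow> f p = 0 \<Longrightarrow> 1 / dist s p \<le> K"
  shows "cmod (deriv f s / f s) \<le> L + r * L * K"
proof -
  define Z where "Z = {z\<in>ball s r. f z = 0}"
  define \<Sigma> where "\<Sigma> = (\<Sum>p\<in>Z. of_int (zorder f p) / (p - s))"
  have zorder_nonneg: "0 \<le> zorder f p" if "p \<in> Z" for p
    using zorder_nonneg_of_finite_zeros[OF open_ball hol fin] that r by (auto simp: Z_def)
  have "deriv f holomorphic_on ball s R" by (rule holomorphic_deriv[OF hol open_ball])
  then have "continuous_on (sphere s r) (\<lambda>z. deriv f z / f z / (z - s))"
    using hol sph r
    by (intro continuous_on_divide continuous_intros) (auto intro: holomorphic_on_imp_continuous_on elim!: holomorphic_on_subset)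
  moreover have "cmod (deriv f z / f z / (z - s)) \<le> L / r" if "z \<in> sphere s r" for z
  proof -
    have "cmod (deriv f z / f z / (z - s)) = cmod (deriv f z / f z) / r"
      using that by (simp only: norm_divide) (simp add: dist_norm norm_minus_commute)
    then show ?thesis using L[OF that] r(1) by (simp add: divide_right_mono)
  qed
  ultimately have "cmod (contour_integral (circlepath s r) (\<lambda>z. deriv f z / f z / (z - s))) \<le> L / r * (2 * pi * r)"
    using r(1) by (blast intro: norm_contour_integral_circlepath_le)
  then have integral_le: "cmod (deriv f s / f s + \<Sigma>) \<le> L"
    using contour_integral_logderiv_div_circlepath[OF hol fin r sph \<open>f s \<noteq> 0\<close>] r(1)
    by (simp add: \<Sigma>_def Z_def norm_mult)
  have "cmod \<Sigma> \<le> (\<Sum>p\<in>Z. K * real_of_int (zorder f p))"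
    unfolding \<Sigma>_def
  proof (rule sum_norm_le)
    fix p assume "p \<in> Z"
    then have "1 / cmod (p - s) \<le> K" using K(2) by (auto simp: Z_def dist_norm norm_minus_commute)
    have "cmod (of_int (zorder f p) / (p - s)) = 1 / cmod (p - s) * real_of_int (zorder f p)"
      using zorder_nonneg[OF \<open>p \<in> Z\<close>] by (simp add: norm_divide)
    also have "\<dots> \<le> K * real_of_int (zorder f p)"
      using \<open>1 / cmod (p - s) \<le> K\<close> zorder_nonneg[OF \<open>p \<in> Z\<close>] by (intro mult_right_mono) auto
    finally show "cmod (of_int (zorder f p) / (p - s)) \<le> K * real_of_int (zorder f p)" .
  qed
  also have "\<dots> \<le> K * (r * L)"
    using sum_zorder_le_logderiv_bound[OF hol fin r sph L] K(1)
    by (simp add: Z_def sum_distrib_left[symmetric] mult_left_mono)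
  finally have sum_le: "cmod \<Sigma> \<le> K * (r * L)" .
  have "cmod (deriv f s / f s) \<le> cmod (deriv f s / f s + \<Sigma>) + cmod \<Sigma>"
    using norm_triangle_ineq4[of "deriv f s / f s + \<Sigma>" \<Sigma>] by simp
  also have "\<dots> \<le> L + r * L * K" using integral_le sum_le by (simp add: algebra_simps)
  finally show ?thesis .
qed

lemma infdist_zero_set_pos:
  assumes "continuous_on S f" "open S" "s \<in> S" "f s \<noteq> 0" "zero_set S f \<noteq> {}"
  shows "infdist s (zero_set S f) > 0"
proof -
  obtain e where "e > 0" and e: "\<And>y. y \<in> S \<Longrightarrow> dist y s < e \<Longrightarrow> dist (f y) (f s) < cmod (f s)"
    using assms(1,3,4) unfolding continuous_on_iff by (metis zero_less_norm_iff)
  have "s \<notin> closure (zero_set S f)"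
  proof
    assume "s \<in> closure (zero_set S f)"
    then obtain y where "y \<in> zero_set S f" "dist y s < e" using \<open>e > 0\<close> closure_approachable by blast
    then show False using e[of y] by (simp add: zero_set_def)
  qed
  then show ?thesis
    using in_closure_iff_infdist_zero[OF assms(5)] infdist_nonneg[of s] by (simp add: order_less_le)
qed

lemma logderiv_bound_zero_set:
  assumes hol: "f holomorphic_on S" "open S" "connected S" and p0: "p0 \<in> S" "f p0 \<noteq> 0"
    and ball: "cball s R \<subseteq> S" and r: "0 < r" "r < R" "r \<le> \<rho>" and "f s \<noteq> 0"
    and sph: "\<And>z. z \<in> sphere s r \<Longrightarrow> f z \<noteq> 0 \<and> cmod (deriv f z / f z) \<le> L"
  shows "cmod (deriv f s / f s) \<le>
    (if zero_set S f = {} then L else L + \<rho> * L / infdist s (zero_set S f))"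
proof -
  define K where "K = (if zero_set S f = {} then 0 else 1 / infdist s (zero_set S f))"
  have "s \<in> S" using ball r by auto
  then have infdist_pos: "zero_set S f \<noteq> {} \<Longrightarrow> infdist s (zero_set S f) > 0"
    using infdist_zero_set_pos[OF holomorphic_on_imp_continuous_on[OF hol(1)] hol(2)] \<open>f s \<noteq> 0\<close> by blast
  have "finite {z\<in>cball s R. f z = 0}"
    using finite_zeros_in_compact[OF hol p0 compact_cball ball] .
  then have "finite {z\<in>ball s R. f z = 0}" by (rule rev_finite_subset) auto
  moreover have "f holomorphic_on ball s R"
    using hol(1) ball by (meson ball_subset_cball holomorphic_on_subset order_trans)
  moreover have "1 / dist s p \<le> K" if "p \<in> ball s r" "f p = 0" for p
  proof -
    have "p \<in> zero_set S f" using that ball r by (auto simp: zero_set_def)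
    then show ?thesis using infdist_pos infdist_le[of p "zero_set S f" s] by (auto simp: K_def intro!: frac_le)
  qed
  moreover have "0 \<le> K" by (simp add: K_def infdist_nonneg)
  ultimately have "cmod (deriv f s / f s) \<le> L + r * L * K"
    using logderiv_bound_by_circle[of f s R r L K] r sph \<open>f s \<noteq> 0\<close> by blast
  also have "\<dots> \<le> L + \<rho> * L * K"
  proof -
    have "s + of_real r \<in> sphere s r" using r by (simp add: dist_norm)
    then have "0 \<le> L" using sph norm_ge_zero order_trans by blast
    then show ?thesis using r \<open>0 \<le> K\<close> by (intro add_left_mono mult_right_mono) auto
  qed
  finally show ?thesis by (cases "zero_set S f = {}") (simp_all add: K_def)
qed

lemma almost_periodic_logderiv_bounded_on_circles:
  assumes hol: "f holomorphic_on strip \<alpha> \<beta>" and ap: "almost_periodic_on (strip \<alpha> \<beta>) f"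
    and p0: "p0 \<in> strip \<alpha> \<beta>" "f p0 \<noteq> 0" and "\<delta> > 0"
  obtains L where "\<And>s. s \<in> strip (\<alpha> + \<delta>) (\<beta> - \<delta>) \<Longrightarrow>
    \<exists>r\<in>{\<delta>/4..\<delta>/2}. \<forall>z\<in>sphere s r. f z \<noteq> 0 \<and> cmod (deriv f z / f z) \<le> L"
proof -
  obtain \<mu> where "\<mu> > 0" and circles: "\<And>s. s \<in> strip (\<alpha> + \<delta>) (\<beta> - \<delta>) \<Longrightarrow>
      \<exists>r\<in>{\<delta>/4..\<delta>/2}. \<forall>z\<in>sphere s r. \<mu> \<le> cmod (f z)"
    using almost_periodic_circles_bounded_below[OF hol ap p0, of "\<delta>/4" "\<delta>/2" \<delta>] \<open>\<delta> > 0\<close> by auto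
  have "\<alpha> < \<alpha> + \<delta>/4" "\<beta> - \<delta>/4 < \<beta>" using \<open>\<delta> > 0\<close> by simp_all
  then obtain M where M: "\<And>z. \<alpha> + \<delta>/4 \<le> Re z \<Longrightarrow> Re z \<le> \<beta> - \<delta>/4 \<Longrightarrow> cmod (f z) \<le> M"
    using almost_periodic_bounded_on_closed_substrip[OF ap holomorphic_on_imp_continuous_on[OF hol]] by blast
  have "\<exists>r\<in>{\<delta>/4..\<delta>/2}. \<forall>z\<in>sphere s r. f z \<noteq> 0 \<and> cmod (deriv f z / f z) \<le> M / (\<delta>/4) / \<mu>"
    if s: "s \<in> strip (\<alpha> + \<delta>) (\<beta> - \<delta>)" for s
  proof -
    obtain r where r: "r \<in> {\<delta>/4..\<delta>/2}" and f_large: "\<forall>z\<in>sphere s r. \<mu> \<le> cmod (f z)"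
      using circles[OF s] by blast
    have "f z \<noteq> 0 \<and> cmod (deriv f z / f z) \<le> M / (\<delta>/4) / \<mu>" if "z \<in> sphere s r" for z
    proof -
      have "\<bar>Re z - Re s\<bar> \<le> r"
        using abs_Re_le_cmod[of "z - s"] that by (simp add: dist_norm norm_minus_commute)
      then have Re_z: "\<alpha> + 2 * (\<delta>/4) \<le> Re z" "Re z \<le> \<beta> - 2 * (\<delta>/4)" using s r by (auto simp: strip_def)
      then have "cmod (f z) \<le> M" using M \<open>\<delta> > 0\<close> by simp
      then have "0 \<le> M" using norm_ge_zero order_trans by blast
      have deriv_le: "cmod (deriv f z) \<le> M / (\<delta>/4)"
        by (rule deriv_bound_on_closed_substrip[OF hol _ M Re_z]) (use \<open>\<delta> > 0\<close> in simp)
      have f_ge: "\<mu> \<le> cmod (f z)" using f_large that by blast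
      have "cmod (deriv f z) / cmod (f z) \<le> M / (\<delta>/4) / \<mu>"
        by (rule frac_le[OF _ deriv_le \<open>\<mu> > 0\<close> f_ge]) (use \<open>0 \<le> M\<close> \<open>\<delta> > 0\<close> in simp)
      then show ?thesis using f_ge \<open>\<mu> > 0\<close> by (auto simp: norm_divide)
    qed
    then show ?thesis using r by blast
  qed
  then show ?thesis using that by blast
qed

theorem lemma3p4:
  fixes f :: "complex \<Rightarrow> complex" and \<alpha> \<beta> :: real
  assumes "\<alpha> < \<beta>"
    and "f analytic_on strip \<alpha> \<beta>"
    and "almost_periodic_on (strip \<alpha> \<beta>) f"
    and "\<exists>s\<in>strip \<alpha> \<beta>. f s \<noteq> 0"
  shows "\<forall>\<delta>>0. \<exists>A B :: real. \<forall>s\<in>strip (\<alpha> + \<delta>) (\<beta> - \<delta>). f s \<noteq> 0 \<longrightarrow>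
           cmod (deriv f s / f s) \<le>
             (if zero_set (strip \<alpha> \<beta>) f = {} then A
              else A + B / infdist s (zero_set (strip \<alpha> \<beta>) f))"
proof (intro allI impI)
  fix \<delta> :: real assume "\<delta> > 0"
  have hol: "f holomorphic_on strip \<alpha> \<beta>" using assms(2) by (rule analytic_imp_holomorphic)
  obtain p0 where p0: "p0 \<in> strip \<alpha> \<beta>" "f p0 \<noteq> 0" using assms(4) by blast
  obtain L where circles: "\<And>s. s \<in> strip (\<alpha> + \<delta>) (\<beta> - \<delta>) \<Longrightarrow>
      \<exists>r\<in>{\<delta>/4..\<delta>/2}. \<forall>z\<in>sphere s r. f z \<noteq> 0 \<and> cmod (deriv f z / f z) \<le> L"
    using almost_periodic_logderiv_bounded_on_circles[OF hol assms(3) p0 \<open>\<delta> > 0\<close>] by blast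
  have "cmod (deriv f s / f s) \<le> (if zero_set (strip \<alpha> \<beta>) f = {} then L
      else L + \<delta>/2 * L / infdist s (zero_set (strip \<alpha> \<beta>) f))"
    if s: "s \<in> strip (\<alpha> + \<delta>) (\<beta> - \<delta>)" and "f s \<noteq> 0" for s
  proof -
    obtain r where r: "\<delta>/4 \<le> r" "r \<le> \<delta>/2"
      and sph: "\<forall>z\<in>sphere s r. f z \<noteq> 0 \<and> cmod (deriv f z / f z) \<le> L"
      using circles[OF s] by auto
    have "cball s (r + \<delta>/4) \<subseteq> strip \<alpha> \<beta>" using s r by (intro cball_subset_strip) (auto simp: strip_def)
    then show ?thesis
      by (rule logderiv_bound_zero_set[OF hol open_strip convex_connected[OF convex_strip] p0])
        (use r sph \<open>\<delta> > 0\<close> \<open>f s \<noteq> 0\<close> in auto)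
  qed
  then show "\<exists>A B :: real. \<forall>s\<in>strip (\<alpha> + \<delta>) (\<beta> - \<delta>). f s \<noteq> 0 \<longrightarrow>
      cmod (deriv f s / f s) \<le> (if zero_set (strip \<alpha> \<beta>) f = {} then A
        else A + B / infdist s (zero_set (strip \<alpha> \<beta>) f))"
    by blast
qed

end
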